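(* Let $n\geqslant2$, $\lambda>0$, distinct points $p_1,\ldots,p_M\in\mathbb{Z}^n$ and positive integers $n_1,\ldots,n_M$ be given, and let $g=4\pi\sum_{j=1}^Mn_j\delta_{p_j}$. Let $\Omega_0\subset\mathbb{Z}^n$ be a finite set containing $\{p_j\}_{j=1}^M$ and let $\Omega$ be a finite connected subset with $\Omega_0\subset\Omega$. Fix a constant $K>2\lambda$. Let $u_0=0$ and, for $k\geqslant1$, let $u_k:\overline{\Omega}\to\mathbb{R}$ solve $$(\Delta-K)u_k=\lambda e^{u_{k-1}}(e^{u_{k-1}}-1)+g-Ku_{k-1}\ \text{ on }\Omega,\qquad u_k=0\ \text{ on }\delta\Omega.$$ Then for each $k$, $u_k$ is uniquely defined, and $0=u_0\geqslant u_1\geqslant u_2\geqslant\cdots$ on $\overline\Omega$.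
   Context: $\mathbb{Z}^n$ is the integer lattice graph with $x\sim y$ iff $\sum_i|x_i-y_i|=1$. For a finite $\Omega\subset\mathbb{Z}^n$, $\delta\Omega=\{y\in\mathbb{Z}^n\setminus\Omega:\exists x\in\Omega,\ y\sim x\}$ and $\overline\Omega=\Omega\cup\delta\Omega$. For $u:\overline\Omega\to\mathbb{R}$ and $x\in\Omega$, $\Delta u(x)=\sum_{y\sim x}(u(y)-u(x))$. $\delta_p$ is the function equal to $1$ at $p$ and $0$ elsewhere. *)

theory Defs
  imports "HOL-Analysis.Analysis"
begin

definition lat_adj :: "int ^ 'n \<Rightarrow> int ^ 'n \<Rightarrow> bool" where
  "lat_adj x y \<longleftrightarrow> (\<Sum>i\<in>UNIV. \<bar>x $ i - y $ i\<bar>) = 1"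

definition lat_bdry :: "(int ^ 'n) set \<Rightarrow> (int ^ 'n) set" where
  "lat_bdry \<Omega> = {y. y \<notin> \<Omega> \<and> (\<exists>x\<in>\<Omega>. lat_adj y x)}"

definition lat_closure :: "(int ^ 'n) set \<Rightarrow> (int ^ 'n) set" where
  "lat_closure \<Omega> = \<Omega> \<union> lat_bdry \<Omega>"

definition lat_laplacian :: "(int ^ 'n \<Rightarrow> real) \<Rightarrow> int ^ 'n \<Rightarrow> real" where
  "lat_laplacian u x = (\<Sum>y\<in>{y. lat_adj y x}. (u y - u x))"

definition lat_connected :: "(int ^ 'n) set \<Rightarrow> bool" where
  "lat_connected \<Omega> \<longleftrightarrow>
     (\<forall>x\<in>\<Omega>. \<forall>y\<in>\<Omega>. (\<lambda>a b. a \<in> \<Omega> \<and> b \<in> \<Omega> \<and> lat_adj a b)\<^sup>*\<^sup>* x y)"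

definition iter_solves ::
  "real \<Rightarrow> real \<Rightarrow> (int ^ 'n \<Rightarrow> real) \<Rightarrow> (int ^ 'n) set \<Rightarrow>
   (int ^ 'n \<Rightarrow> real) \<Rightarrow> (int ^ 'n \<Rightarrow> real) \<Rightarrow> bool" where
  "iter_solves K lam g \<Omega> v u \<longleftrightarrow>
     (\<forall>x\<in>\<Omega>. lat_laplacian u x - K * u x
               = lam * exp (v x) * (exp (v x) - 1) + g x - K * v x)
   \<and> (\<forall>y\<in>lat_bdry \<Omega>. u y = 0)"

end

theory Submission
  imports Defs
begin

text \<open>
  On a finite set \<open>\<Omega>\<close> the operator \<open>\<Delta> - K\<close> with \<open>K > 0\<close> obeys a maximum principle: at a
  positive maximum of \<open>w\<close> the Laplacian is \<open>\<le> 0\<close>, so \<open>(\<Delta> - K) w \<ge> 0\<close> forces \<open>w \<le> 0\<close> when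
  \<open>w \<le> 0\<close> on \<open>\<delta>\<Omega>\<close>. This yields comparison and uniqueness for the Dirichlet problem;
  existence comes from the Jacobi sweep \<open>u x \<leftarrow> ((\<Sum>y\<sim>x. u y) - F x) / (deg x + K)\<close>, a
  contraction in the sup norm. Monotonicity of the iteration is an induction: for \<open>K \<ge> \<lambda>\<close> the
  map \<open>t \<mapsto> \<lambda> e\<^sup>t (e\<^sup>t - 1) - K t\<close> is nonincreasing on \<open>t \<le> 0\<close>, so \<open>u\<^sub>k \<le> u\<^sub>k\<^sub>-\<^sub>1 \<le> 0\<close>
  makes the right-hand side for \<open>u\<^sub>k\<^sub>+\<^sub>1\<close> dominate that for \<open>u\<^sub>k\<close>, and comparison gives
  \<open>u\<^sub>k\<^sub>+\<^sub>1 \<le> u\<^sub>k\<close>. Of the data only \<open>g \<ge> 0\<close> matters.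
\<close>

lemma lat_laplacian_diff:
  "lat_laplacian (\<lambda>x. a x - b x) x = lat_laplacian a x - lat_laplacian b x"
  unfolding lat_laplacian_def by (simp add: sum_subtractf[symmetric] algebra_simps)

lemma lat_laplacian_eq:
  "lat_laplacian u x = (\<Sum>y | lat_adj y x. u y) - real (card {y. lat_adj y x}) * u x"
  unfolding lat_laplacian_def by (simp add: sum_subtractf)

lemma lat_max_principle:
  assumes "finite \<Omega>" and "K > 0"
    and super: "\<forall>x\<in>\<Omega>. lat_laplacian w x - K * w x \<ge> 0"
    and boundary: "\<forall>y\<in>lat_bdry \<Omega>. w y \<le> 0"
  shows "\<forall>x\<in>\<Omega>. w x \<le> 0"
proof (rule ccontr)
  assume "\<not> ?thesis"
  then obtain x1 where x1: "x1 \<in> \<Omega>" "w x1 > 0" by auto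
  have "Max (w ` \<Omega>) \<in> w ` \<Omega>" using \<open>finite \<Omega>\<close> x1(1) by (intro Max_in) auto
  then obtain x0 where x0: "x0 \<in> \<Omega>" "w x0 = Max (w ` \<Omega>)" by auto
  then have max: "\<forall>y\<in>\<Omega>. w y \<le> w x0" using \<open>finite \<Omega>\<close> by simp
  have pos: "w x0 > 0" using max x1 by force
  have "w y - w x0 \<le> 0" if "lat_adj y x0" for y
  proof (cases "y \<in> \<Omega>")
    case False
    then have "y \<in> lat_bdry \<Omega>" using that x0 unfolding lat_bdry_def by auto
    then show ?thesis using boundary pos by force
  qed (use max in auto)
  then have "lat_laplacian w x0 \<le> 0" unfolding lat_laplacian_def by (intro sum_nonpos) auto
  moreover have "K * w x0 > 0" using \<open>K > 0\<close> pos by simp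
  ultimately show False using super x0 by force
qed

lemma lat_comparison:
  assumes "finite \<Omega>" and "K > 0"
    and "\<forall>x\<in>\<Omega>. lat_laplacian b x - K * b x \<le> lat_laplacian a x - K * a x"
    and "\<forall>y\<in>lat_bdry \<Omega>. a y \<le> b y"
  shows "\<forall>x\<in>\<Omega>. a x \<le> b x"
  using lat_max_principle[OF assms(1,2), of "\<lambda>x. a x - b x"] assms(3,4)
  by (simp add: lat_laplacian_diff algebra_simps)

lemma lat_dirichlet_unique:
  assumes "finite \<Omega>" and "K > 0"
    and "\<forall>x\<in>\<Omega>. lat_laplacian a x - K * a x = lat_laplacian b x - K * b x"
    and "\<forall>y\<in>lat_bdry \<Omega>. a y = b y"
  shows "\<forall>x\<in>lat_closure \<Omega>. a x = b x"
  using lat_comparison[OF assms(1,2), of a b] lat_comparison[OF assms(1,2), of b a] assms(3,4)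
  unfolding lat_closure_def by (auto intro: order.antisym)

lemma fun_contraction_fixpoint:
  fixes T :: "('a \<Rightarrow> real) \<Rightarrow> 'a \<Rightarrow> real"
  assumes c: "0 \<le> c" "c < 1"
    and contraction: "\<And>f g \<delta> x. (\<And>y. \<bar>f y - g y\<bar> \<le> \<delta>) \<Longrightarrow> \<bar>T f x - T g x\<bar> \<le> c * \<delta>"
    and first_step: "\<And>x. \<bar>T f0 x - f0 x\<bar> \<le> B"
  shows "\<exists>L. T L = L"
proof -
  define f where "f m = (T ^^ m) f0" for m
  define r where "r m = B * c ^ m / (1 - c)" for m
  have f_Suc: "f (Suc m) = T (f m)" for m by (simp add: f_def)
  have step: "\<bar>f (Suc m) x - f m x\<bar> \<le> B * c ^ m" for m x
  proof (induction m arbitrary: x)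
    case 0
    show ?case using first_step by (simp add: f_def)
  next
    case (Suc m)
    have "\<bar>T (f (Suc m)) x - T (f m) x\<bar> \<le> c * (B * c ^ m)" by (rule contraction) (rule Suc.IH)
    then show ?case by (simp add: f_Suc[of "Suc m"] f_Suc[of m] algebra_simps)
  qed
  have drift: "\<bar>f (m + k) x - f m x\<bar> \<le> B * (c ^ m - c ^ (m + k)) / (1 - c)" for m k x
  proof (induction k)
    case (Suc k)
    have "\<bar>f (m + Suc k) x - f m x\<bar> \<le> \<bar>f (Suc (m + k)) x - f (m + k) x\<bar> + \<bar>f (m + k) x - f m x\<bar>"
      by simp
    also have "\<dots> \<le> B * c ^ (m + k) + B * (c ^ m - c ^ (m + k)) / (1 - c)"
      using step Suc.IH by (rule add_mono)
    also have "\<dots> = B * (c ^ m - c ^ (m + Suc k)) / (1 - c)"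
      using c by (simp add: field_simps)
    finally show ?case .
  qed simp
  have "0 \<le> B" using first_step by (meson abs_ge_zero order_trans)
  then have drift_bound: "\<bar>f k x - f m x\<bar> \<le> r m" if "m \<le> k" for m k x
  proof -
    have "B * (c ^ m - c ^ k) / (1 - c) \<le> r m"
      unfolding r_def using c \<open>0 \<le> B\<close> by (intro divide_right_mono mult_left_mono) auto
    then show ?thesis using drift[of m "k - m" x] that by simp
  qed
  define L where "L x = f0 x + (\<Sum>m. f (Suc m) x - f m x)" for x
  have lim: "(\<lambda>k. f k x) \<longlonglongrightarrow> L x" for x
  proof -
    have "summable (\<lambda>m. f (Suc m) x - f m x)"
    proof (rule summable_comparison_test)
      show "\<exists>N. \<forall>m\<ge>N. norm (f (Suc m) x - f m x) \<le> B * c ^ m" using step by auto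
      show "summable (\<lambda>m. B * c ^ m)" using c by (intro summable_mult summable_geometric) auto
    qed
    then have "(\<lambda>k. f0 x + (\<Sum>m<k. f (Suc m) x - f m x)) \<longlonglongrightarrow> L x"
      unfolding L_def by (intro tendsto_add tendsto_const summable_LIMSEQ)
    moreover have "f0 x + (\<Sum>m<k. f (Suc m) x - f m x) = f k x" for k
      using sum_lessThan_telescope[of "\<lambda>m. f m x" k] by (simp add: f_def)
    ultimately show ?thesis by simp
  qed
  have tail: "\<bar>L x - f m x\<bar> \<le> r m" for m x
  proof -
    have "(\<lambda>k. \<bar>f k x - f m x\<bar>) \<longlonglongrightarrow> \<bar>L x - f m x\<bar>" using lim by (intro tendsto_intros)
    then show ?thesis by (rule Lim_bounded[where M = m]) (use drift_bound in auto)
  qed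
  have r_zero: "r \<longlonglongrightarrow> 0"
  proof -
    have "(\<lambda>m. B / (1 - c) * c ^ m) \<longlonglongrightarrow> 0"
      using c by (intro tendsto_mult_right_zero LIMSEQ_power_zero) auto
    then show ?thesis by (simp add: r_def[abs_def])
  qed
  have "T L = L"
  proof
    fix x
    have bound: "\<bar>T L x - L x\<bar> \<le> c * r m + r (Suc m)" for m
    proof -
      have "\<bar>T L x - T (f m) x\<bar> \<le> c * r m" by (rule contraction) (rule tail)
      moreover have "\<bar>f (Suc m) x - L x\<bar> \<le> r (Suc m)" using tail[of x "Suc m"] by simp
      ultimately show ?thesis by (simp add: f_Suc)
    qed
    have "(\<lambda>m. c * r m + r (Suc m)) \<longlonglongrightarrow> 0"
      using r_zero by (intro tendsto_add_zero tendsto_mult_right_zero LIMSEQ_Suc)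
    then have "\<bar>T L x - L x\<bar> \<le> 0" by (rule LIMSEQ_le_const) (use bound in blast)
    then show "T L x = L x" by simp
  qed
  then show ?thesis by blast
qed

definition lat_jacobi ::
  "real \<Rightarrow> (int ^ 'n \<Rightarrow> real) \<Rightarrow> (int ^ 'n) set \<Rightarrow> (int ^ 'n \<Rightarrow> real) \<Rightarrow> int ^ 'n \<Rightarrow> real" where
  "lat_jacobi K F \<Omega> u x =
     (if x \<in> \<Omega> then ((\<Sum>y | lat_adj y x. u y) - F x) / (real (card {y. lat_adj y x}) + K) else 0)"

lemma lat_jacobi_contraction:
  assumes "finite \<Omega>" and "K > 0" and close: "\<And>y. \<bar>u y - v y\<bar> \<le> \<delta>"
  defines "D \<equiv> (\<Sum>x\<in>\<Omega>. real (card {y. lat_adj y x}))"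
  shows "\<bar>lat_jacobi K F \<Omega> u x - lat_jacobi K F \<Omega> v x\<bar> \<le> D / (D + K) * \<delta>"
proof -
  have "0 \<le> \<delta>" using close by (meson abs_ge_zero order_trans)
  show ?thesis
  proof (cases "x \<in> \<Omega>")
    case False
    have "0 \<le> D" unfolding D_def by (simp add: sum_nonneg)
    then show ?thesis using False \<open>K > 0\<close> \<open>0 \<le> \<delta>\<close> unfolding lat_jacobi_def by simp
  next
    case True
    define d where "d = real (card {y. lat_adj y x})"
    have "d \<le> D" unfolding d_def D_def using \<open>finite \<Omega>\<close> True by (intro member_le_sum) auto
    have "\<bar>lat_jacobi K F \<Omega> u x - lat_jacobi K F \<Omega> v x\<bar> = \<bar>\<Sum>y | lat_adj y x. u y - v y\<bar> / (d + K)"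
      using True \<open>K > 0\<close> unfolding lat_jacobi_def d_def
      by (simp add: sum_subtractf diff_divide_distrib[symmetric])
    also have "\<dots> \<le> (\<Sum>y | lat_adj y x. \<delta>) / (d + K)"
      using \<open>K > 0\<close> close unfolding d_def
      by (intro divide_right_mono order_trans[OF sum_abs sum_mono]) auto
    also have "\<dots> = d / (d + K) * \<delta>" by (simp add: d_def)
    also have "\<dots> \<le> D / (D + K) * \<delta>"
    proof (rule mult_right_mono)
      have "d * (D + K) \<le> D * (d + K)" using \<open>d \<le> D\<close> \<open>K > 0\<close> by (simp add: algebra_simps)
      moreover have "0 < d + K" "0 < D + K" using \<open>d \<le> D\<close> \<open>K > 0\<close> by (auto simp: d_def)
      ultimately show "d / (d + K) \<le> D / (D + K)" by (simp add: divide_simps)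
    qed (rule \<open>0 \<le> \<delta>\<close>)
    finally show ?thesis .
  qed
qed

lemma lat_jacobi_fixpoint_solves:
  assumes "K > 0" and fixed: "lat_jacobi K F \<Omega> u = u"
  shows "(\<forall>x\<in>\<Omega>. lat_laplacian u x - K * u x = F x) \<and> (\<forall>x. x \<notin> \<Omega> \<longrightarrow> u x = 0)"
proof (intro conjI ballI allI impI)
  fix x
  have ux: "u x = lat_jacobi K F \<Omega> u x" using fixed by simp
  then show "x \<notin> \<Omega> \<Longrightarrow> u x = 0" by (simp add: lat_jacobi_def)
  assume "x \<in> \<Omega>"
  define d where "d = real (card {y. lat_adj y x})"
  have "0 < d + K" using \<open>K > 0\<close> by (simp add: d_def add_nonneg_pos)
  moreover have "u x = ((\<Sum>y | lat_adj y x. u y) - F x) / (d + K)"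
    using ux \<open>x \<in> \<Omega>\<close> by (simp add: lat_jacobi_def d_def)
  ultimately have "u x * (d + K) = (\<Sum>y | lat_adj y x. u y) - F x" by (simp add: divide_eq_eq)
  then show "lat_laplacian u x - K * u x = F x" by (simp add: lat_laplacian_eq d_def algebra_simps)
qed

lemma lat_dirichlet_exists:
  fixes F :: "int ^ 'n \<Rightarrow> real"
  assumes "finite \<Omega>" and "K > 0"
  shows "\<exists>u. (\<forall>x\<in>\<Omega>. lat_laplacian u x - K * u x = F x) \<and> (\<forall>x. x \<notin> \<Omega> \<longrightarrow> u x = 0)"
proof -
  define D where "D = (\<Sum>x\<in>\<Omega>. real (card {y. lat_adj y x}))"
  define B where "B = (\<Sum>z\<in>\<Omega>. \<bar>lat_jacobi K F \<Omega> (\<lambda>_. 0) z\<bar>)"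
  have "0 \<le> D" unfolding D_def by (simp add: sum_nonneg)
  then have c: "0 \<le> D / (D + K)" "D / (D + K) < 1" using \<open>K > 0\<close> by auto
  have first_step: "\<bar>lat_jacobi K F \<Omega> (\<lambda>_. 0) x - 0\<bar> \<le> B" for x
  proof (cases "x \<in> \<Omega>")
    case True
    then show ?thesis unfolding B_def using \<open>finite \<Omega>\<close> by (simp, intro member_le_sum) auto
  qed (simp add: lat_jacobi_def B_def sum_nonneg)
  have contraction: "\<bar>lat_jacobi K F \<Omega> f x - lat_jacobi K F \<Omega> g x\<bar> \<le> D / (D + K) * \<delta>"
    if "\<And>y. \<bar>f y - g y\<bar> \<le> \<delta>" for f g \<delta> x
    using lat_jacobi_contraction[OF assms that] unfolding D_def .
  obtain u where "lat_jacobi K F \<Omega> u = u"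
    using fun_contraction_fixpoint[where T = "lat_jacobi K F \<Omega>", OF c contraction first_step] by blast
  then show ?thesis using lat_jacobi_fixpoint_solves[OF \<open>K > 0\<close>] by blast
qed

lemma exp_nonlinearity_antimono:
  fixes lam K s t :: real
  assumes "0 \<le> lam" and "lam \<le> K" and "s \<le> t" and "t \<le> 0"
  shows "lam * exp t * (exp t - 1) - K * t \<le> lam * exp s * (exp s - 1) - K * s"
proof (rule DERIV_nonpos_imp_nonincreasing[OF \<open>s \<le> t\<close>])
  fix r assume "s \<le> r" "r \<le> t"
  have "exp r * (2 * exp r - 1) \<le> 1"
  proof -
    have "exp r \<le> 1" using \<open>r \<le> t\<close> \<open>t \<le> 0\<close> by simp
    then have "(2 * exp r + 1) * (exp r - 1) \<le> 0" by (simp add: mult_nonneg_nonpos)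
    then show ?thesis by (simp add: algebra_simps)
  qed
  then have "lam * (exp r * (2 * exp r - 1)) \<le> lam * 1" using \<open>0 \<le> lam\<close> by (rule mult_left_mono)
  then have "lam * exp r * (exp r - 1) + lam * exp r * exp r - K \<le> 0"
    using \<open>lam \<le> K\<close> by (simp add: algebra_simps)
  moreover have "((\<lambda>r. lam * exp r * (exp r - 1) - K * r) has_real_derivative
      lam * exp r * (exp r - 1) + lam * exp r * exp r - K) (at r)"
    by (auto intro!: derivative_eq_intros simp: algebra_simps)
  ultimately show "\<exists>y. ((\<lambda>r. lam * exp r * (exp r - 1) - K * r) has_real_derivative y) (at r) \<and> y \<le> 0"
    by blast
qed

lemma iter_solves_unique:
  assumes "finite \<Omega>" and "K > 0"
    and "iter_solves K lam g \<Omega> v u" and "iter_solves K lam g \<Omega> v w"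
  shows "\<forall>x\<in>lat_closure \<Omega>. w x = u x"
  using lat_dirichlet_unique[OF assms(1,2), of w u] assms(3,4) unfolding iter_solves_def by simp

lemma iter_solves_from_zero_nonpos:
  assumes "finite \<Omega>" and "K > 0" and "\<forall>x\<in>\<Omega>. 0 \<le> g x"
    and "iter_solves K lam g \<Omega> (\<lambda>_. 0) u"
  shows "\<forall>x\<in>\<Omega>. u x \<le> 0"
  using assms(3,4) unfolding iter_solves_def
  by (intro lat_comparison[OF assms(1,2), where a = u and b = "\<lambda>_. 0"]) (auto simp: lat_laplacian_def)

lemma iter_solves_antimono:
  assumes "finite \<Omega>" and "0 \<le> lam" and "lam \<le> K" and "K > 0"
    and "iter_solves K lam g \<Omega> v u" and "iter_solves K lam g \<Omega> v' u'"
    and "\<forall>x\<in>\<Omega>. v' x \<le> v x \<and> v x \<le> 0"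
  shows "\<forall>x\<in>\<Omega>. u' x \<le> u x"
proof (rule lat_comparison[OF assms(1,4)])
  show "\<forall>x\<in>\<Omega>. lat_laplacian u x - K * u x \<le> lat_laplacian u' x - K * u' x"
    using assms(5-7) exp_nonlinearity_antimono[OF assms(2,3)] unfolding iter_solves_def by fastforce
  show "\<forall>y\<in>lat_bdry \<Omega>. u' y \<le> u y" using assms(5,6) unfolding iter_solves_def by simp
qed

theorem lemma3p1:
  fixes lam K :: real and M :: nat
    and p :: "nat \<Rightarrow> int ^ 'n" and nn :: "nat \<Rightarrow> nat"
    and \<Omega>0 \<Omega> :: "(int ^ 'n) set" and g :: "int ^ 'n \<Rightarrow> real"
  assumes "CARD('n) \<ge> 2"
    and "lam > 0"
    and "inj_on p {1..M}"
    and "\<forall>j\<in>{1..M}. nn j > 0"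
    and "g = (\<lambda>x. 4 * pi * (\<Sum>j=1..M. real (nn j) * (if x = p j then 1 else 0)))"
    and "finite \<Omega>0" and "p ` {1..M} \<subseteq> \<Omega>0"
    and "finite \<Omega>" and "lat_connected \<Omega>" and "\<Omega>0 \<subseteq> \<Omega>"
    and "K > 2 * lam"
  shows "\<exists>u :: nat \<Rightarrow> int ^ 'n \<Rightarrow> real.
           u 0 = (\<lambda>x. 0)
         \<and> (\<forall>k\<ge>1. iter_solves K lam g \<Omega> (u (k - 1)) (u k))
         \<and> (\<forall>k\<ge>1. \<forall>w. iter_solves K lam g \<Omega> (u (k - 1)) w
                 \<longrightarrow> (\<forall>x\<in>lat_closure \<Omega>. w x = u k x))
         \<and> (\<forall>k. \<forall>x\<in>lat_closure \<Omega>. u (Suc k) x \<le> u k x)"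
proof -
  have "0 \<le> lam" "lam \<le> K" "0 < K" using assms(2,11) by auto
  have g_nonneg: "\<forall>x\<in>\<Omega>. 0 \<le> g x" unfolding assms(5) by (simp add: sum_nonneg)
  obtain S where S: "\<And>F. (\<forall>x\<in>\<Omega>. lat_laplacian (S F) x - K * S F x = F x) \<and> (\<forall>x. x \<notin> \<Omega> \<longrightarrow> S F x = 0)"
    using lat_dirichlet_exists[OF \<open>finite \<Omega>\<close> \<open>0 < K\<close>] by metis
  define u where "u = rec_nat (\<lambda>_. 0) (\<lambda>_ v. S (\<lambda>x. lam * exp (v x) * (exp (v x) - 1) + g x - K * v x))"
  have solves: "iter_solves K lam g \<Omega> (u k) (u (Suc k))" for k
    using S unfolding iter_solves_def lat_bdry_def u_def by auto
  have outside: "x \<notin> \<Omega> \<Longrightarrow> u k x = 0" for k x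
    using S by (cases k) (auto simp: u_def)
  have "\<forall>x\<in>\<Omega>. u (Suc k) x \<le> u k x \<and> u k x \<le> 0" for k
  proof (induction k)
    case 0
    show ?case using iter_solves_from_zero_nonpos[OF \<open>finite \<Omega>\<close> \<open>0 < K\<close> g_nonneg] solves[of 0]
      by (simp add: u_def)
  next
    case (Suc k)
    then show ?case
      using iter_solves_antimono[OF \<open>finite \<Omega>\<close> \<open>0 \<le> lam\<close> \<open>lam \<le> K\<close> \<open>0 < K\<close> solves solves] by force
  qed
  then have decreasing: "u (Suc k) x \<le> u k x" for k x
    using outside by (cases "x \<in> \<Omega>") auto
  show ?thesis
    using solves iter_solves_unique[OF \<open>finite \<Omega>\<close> \<open>0 < K\<close> solves] decreasing
    by (intro exI[of _ u]) (auto simp: u_def dest!: Suc_le_D)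
qed

end
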